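(* Let $(\mathsf{T}, \mu, \eta, \mathsf{n}, \mathsf{n}_{K})$ be a symmetric comonoidal monad and $(!, \delta, \varepsilon, \Delta, \mathsf{e})$ be a coalgebra modality on the same symmetric monoidal category $(\mathbb{X}, \otimes, K)$, and let $\lambda$ be a coalgebra mixed distributive law of $(\mathsf{T}, \mu, \eta, \mathsf{n}, \mathsf{n}_{K})$ over $(!, \delta, \varepsilon, \Delta, \mathsf{e})$. If $(A, \omega)$ is a $!$-coalgebra, then $\mathsf{T}(\Delta^\omega);\mathsf{n}_{A,A} = \Delta^{\omega^\flat}$ and $\mathsf{T}(\mathsf{e}^\omega);\mathsf{n}_K = \mathsf{e}^{\omega^\flat}$, where $\omega^\flat := \mathsf{T}(\omega);\lambda_A : \mathsf{T}(A)\to !\mathsf{T}(A)$.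
   Context: Composition is in diagrammatic order. A symmetric comonoidal monad $(\mathsf{T},\mu,\eta,\mathsf{n},\mathsf{n}_K)$ is a monad with symmetric oplax monoidal structure $\mathsf{n}_{A,B}:\mathsf{T}(A\otimes B)\to\mathsf{T}(A)\otimes\mathsf{T}(B)$, $\mathsf{n}_K:\mathsf{T}(K)\to K$ compatible with $\mu,\eta$. A coalgebra modality $(!,\delta,\varepsilon,\Delta,\mathsf{e})$ is a comonad $(!,\delta,\varepsilon)$ with natural transformations $\Delta_A:!(A)\to!(A)\otimes!(A)$, $\mathsf{e}_A:!(A)\to K$ making each $(!(A),\Delta_A,\mathsf{e}_A)$ a cocommutative comonoid such that $\delta_A$ is a comonoid morphism. For a $!$-coalgebra $(B,\omega)$ put $\Delta^\omega:=\omega;\Delta_B;(\varepsilon_B\otimes\varepsilon_B)$ and $\mathsf{e}^\omega:=\omega;\mathsf{e}_B$. A mixed distributive law is a natural $\lambda_A:\mathsf{T}!(A)\to!\mathsf{T}(A)$ with $\mu_{!(A)};\lambda_A=\mathsf{T}(\lambda_A);\lambda_{\mathsf{T}(A)};!(\mu_A)$, $\eta_{!(A)};\lambda_A=!(\eta_A)$, $\mathsf{T}(\delta_A);\lambda_{!(A)};!(\lambda_A)=\lambda_A;\delta_{\mathsf{T}(A)}$, $\lambda_A;\varepsilon_{\mathsf{T}(A)}=\mathsf{T}(\varepsilon_A)$; it is a coalgebra mixed distributive law if in addition $\mathsf{T}(\Delta_A);\mathsf{n}_{!(A),!(A)};(\lambda_A\otimes\lambda_A)=\lambda_A;\Delta_{\mathsf{T}(A)}$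 and $\mathsf{T}(\mathsf{e}_A);\mathsf{n}_K=\lambda_A;\mathsf{e}_{\mathsf{T}(A)}$. For such $\lambda$, $(\mathsf{T}(A),\omega^\flat)$ is a $!$-coalgebra. *)

theory Defs
  imports Main
begin

text \<open>Composition seq is written in
diagrammatic order: seq f g : src f -> tgt g when tgt f = src g.\<close>

record ('o, 'm) smcat =
  Arr :: "'m set"
  src :: "'m \<Rightarrow> 'o"
  tgt :: "'m \<Rightarrow> 'o"
  idm :: "'o \<Rightarrow> 'm"
  seq :: "'m \<Rightarrow> 'm \<Rightarrow> 'm"
  tens_o :: "'o \<Rightarrow> 'o \<Rightarrow> 'o"
  tens :: "'m \<Rightarrow> 'm \<Rightarrow> 'm"
  unitK :: "'o"
  assoc :: "'o \<Rightarrow> 'o \<Rightarrow> 'o \<Rightarrow> 'm"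
  lunit :: "'o \<Rightarrow> 'm"
  runit :: "'o \<Rightarrow> 'm"
  sym :: "'o \<Rightarrow> 'o \<Rightarrow> 'm"

definition hom :: "('o,'m) smcat \<Rightarrow> 'm \<Rightarrow> 'o \<Rightarrow> 'o \<Rightarrow> bool" where
  "hom C f a b \<longleftrightarrow> f \<in> Arr C \<and> src C f = a \<and> tgt C f = b"

definition is_category :: "('o,'m) smcat \<Rightarrow> bool" where
  "is_category C \<longleftrightarrow>
    (\<forall>a. hom C (idm C a) a a) \<and>
    (\<forall>f g. f \<in> Arr C \<and> g \<in> Arr C \<and> tgt C f = src C g \<longrightarrow>
        hom C (seq C f g) (src C f) (tgt C g)) \<and>
    (\<forall>f \<in> Arr C. seq C (idm C (src C f)) f = f \<and> seq C f (idm C (tgt C f)) = f) \<and>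
    (\<forall>f g h. f \<in> Arr C \<and> g \<in> Arr C \<and> h \<in> Arr C \<and> tgt C f = src C g \<and> tgt C g = src C h \<longrightarrow>
        seq C (seq C f g) h = seq C f (seq C g h))"

definition iso :: "('o,'m) smcat \<Rightarrow> 'm \<Rightarrow> bool" where
  "iso C f \<longleftrightarrow> f \<in> Arr C \<and>
     (\<exists>g. hom C g (tgt C f) (src C f) \<and> seq C f g = idm C (src C f) \<and> seq C g f = idm C (tgt C f))"

definition is_symmetric_monoidal :: "('o,'m) smcat \<Rightarrow> bool" where
  "is_symmetric_monoidal C \<longleftrightarrow> is_category C \<and>
    \<comment> \<open>tensor is a bifunctor\<close>
    (\<forall>f \<in> Arr C. \<forall>g \<in> Arr C. hom C (tens C f g) (tens_o C (src C f) (src C g)) (tens_o C (tgt C f) (tgt C g))) \<and>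
    (\<forall>a b. tens C (idm C a) (idm C b) = idm C (tens_o C a b)) \<and>
    (\<forall>f f' g g'. f \<in> Arr C \<and> f' \<in> Arr C \<and> g \<in> Arr C \<and> g' \<in> Arr C \<and>
        tgt C f = src C f' \<and> tgt C g = src C g' \<longrightarrow>
        tens C (seq C f f') (seq C g g') = seq C (tens C f g) (tens C f' g')) \<and>
    \<comment> \<open>associator (A*B)*C -> A*(B*C): natural isomorphism\<close>
    (\<forall>a b c. hom C (assoc C a b c) (tens_o C (tens_o C a b) c) (tens_o C a (tens_o C b c)) \<and> iso C (assoc C a b c)) \<and>
    (\<forall>f \<in> Arr C. \<forall>g \<in> Arr C. \<forall>h \<in> Arr C.
        seq C (tens C (tens C f g) h) (assoc C (tgt C f) (tgt C g) (tgt C h)) =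
        seq C (assoc C (src C f) (src C g) (src C h)) (tens C f (tens C g h))) \<and>
    \<comment> \<open>left unitor K*A -> A, right unitor A*K -> A\<close>
    (\<forall>a. hom C (lunit C a) (tens_o C (unitK C) a) a \<and> iso C (lunit C a)) \<and>
    (\<forall>f \<in> Arr C. seq C (tens C (idm C (unitK C)) f) (lunit C (tgt C f)) = seq C (lunit C (src C f)) f) \<and>
    (\<forall>a. hom C (runit C a) (tens_o C a (unitK C)) a \<and> iso C (runit C a)) \<and>
    (\<forall>f \<in> Arr C. seq C (tens C f (idm C (unitK C))) (runit C (tgt C f)) = seq C (runit C (src C f)) f) \<and>
    \<comment> \<open>pentagon and triangle\<close>
    (\<forall>a b c d. seq C (assoc C (tens_o C a b) c d) (assoc C a b (tens_o C c d)) =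
        seq C (seq C (tens C (assoc C a b c) (idm C d)) (assoc C a (tens_o C b c) d))
              (tens C (idm C a) (assoc C b c d))) \<and>
    (\<forall>a b. seq C (assoc C a (unitK C) b) (tens C (idm C a) (lunit C b)) = tens C (runit C a) (idm C b)) \<and>
    \<comment> \<open>symmetry A*B -> B*A: natural, involutive, hexagon\<close>
    (\<forall>a b. hom C (sym C a b) (tens_o C a b) (tens_o C b a)) \<and>
    (\<forall>f \<in> Arr C. \<forall>g \<in> Arr C. seq C (tens C f g) (sym C (tgt C f) (tgt C g)) =
        seq C (sym C (src C f) (src C g)) (tens C g f)) \<and>
    (\<forall>a b. seq C (sym C a b) (sym C b a) = idm C (tens_o C a b)) \<and>
    (\<forall>a b c. seq C (seq C (assoc C a b c) (sym C a (tens_o C b c))) (assoc C b c a) =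
        seq C (seq C (tens C (sym C a b) (idm C c)) (assoc C b a c)) (tens C (idm C b) (sym C a c)))"

record ('o, 'm) endofun =
  fo :: "'o \<Rightarrow> 'o"
  fm :: "'m \<Rightarrow> 'm"

definition is_endofunctor :: "('o,'m) smcat \<Rightarrow> ('o,'m) endofun \<Rightarrow> bool" where
  "is_endofunctor C F \<longleftrightarrow>
    (\<forall>f \<in> Arr C. hom C (fm F f) (fo F (src C f)) (fo F (tgt C f))) \<and>
    (\<forall>a. fm F (idm C a) = idm C (fo F a)) \<and>
    (\<forall>f g. f \<in> Arr C \<and> g \<in> Arr C \<and> tgt C f = src C g \<longrightarrow> fm F (seq C f g) = seq C (fm F f) (fm F g))"

definition Fid :: "('o,'m) endofun" where
  "Fid = \<lparr>fo = (\<lambda>a. a), fm = (\<lambda>f. f)\<rparr>"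

text \<open>fcomp F G: first apply F, then G (i.e. the functor G o F).\<close>
definition fcomp :: "('o,'m) endofun \<Rightarrow> ('o,'m) endofun \<Rightarrow> ('o,'m) endofun" where
  "fcomp F G = \<lparr>fo = (\<lambda>a. fo G (fo F a)), fm = (\<lambda>f. fm G (fm F f))\<rparr>"

definition nat_trans :: "('o,'m) smcat \<Rightarrow> ('o,'m) endofun \<Rightarrow> ('o,'m) endofun \<Rightarrow> ('o \<Rightarrow> 'm) \<Rightarrow> bool" where
  "nat_trans C F G t \<longleftrightarrow>
    (\<forall>a. hom C (t a) (fo F a) (fo G a)) \<and>
    (\<forall>f \<in> Arr C. seq C (fm F f) (t (tgt C f)) = seq C (t (src C f)) (fm G f))"

definition is_monad :: "('o,'m) smcat \<Rightarrow> ('o,'m) endofun \<Rightarrow> ('o \<Rightarrow> 'm) \<Rightarrow> ('o \<Rightarrow> 'm) \<Rightarrow> bool" where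
  "is_monad C T mu eta \<longleftrightarrow> is_endofunctor C T \<and>
    nat_trans C (fcomp T T) T mu \<and> nat_trans C Fid T eta \<and>
    (\<forall>a. seq C (mu (fo T a)) (mu a) = seq C (fm T (mu a)) (mu a)) \<and>
    (\<forall>a. seq C (eta (fo T a)) (mu a) = idm C (fo T a)) \<and>
    (\<forall>a. seq C (fm T (eta a)) (mu a) = idm C (fo T a))"

definition is_comonad :: "('o,'m) smcat \<Rightarrow> ('o,'m) endofun \<Rightarrow> ('o \<Rightarrow> 'm) \<Rightarrow> ('o \<Rightarrow> 'm) \<Rightarrow> bool" where
  "is_comonad C B delta eps \<longleftrightarrow> is_endofunctor C B \<and>
    nat_trans C B (fcomp B B) delta \<and> nat_trans C B Fid eps \<and>
    (\<forall>a. seq C (delta a) (delta (fo B a)) = seq C (delta a) (fm B (delta a))) \<and>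
    (\<forall>a. seq C (delta a) (eps (fo B a)) = idm C (fo B a)) \<and>
    (\<forall>a. seq C (delta a) (fm B (eps a)) = idm C (fo B a))"

definition is_sym_comonoidal_monad ::
  "('o,'m) smcat \<Rightarrow> ('o,'m) endofun \<Rightarrow> ('o \<Rightarrow> 'm) \<Rightarrow> ('o \<Rightarrow> 'm) \<Rightarrow> ('o \<Rightarrow> 'o \<Rightarrow> 'm) \<Rightarrow> 'm \<Rightarrow> bool" where
  "is_sym_comonoidal_monad C T mu eta n nK \<longleftrightarrow> is_monad C T mu eta \<and>
    (\<forall>a b. hom C (n a b) (fo T (tens_o C a b)) (tens_o C (fo T a) (fo T b))) \<and>
    (\<forall>f \<in> Arr C. \<forall>g \<in> Arr C. seq C (fm T (tens C f g)) (n (tgt C f) (tgt C g)) =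
        seq C (n (src C f) (src C g)) (tens C (fm T f) (fm T g))) \<and>
    hom C nK (fo T (unitK C)) (unitK C) \<and>
    \<comment> \<open>coassociativity\<close>
    (\<forall>a b c. seq C (seq C (fm T (assoc C a b c)) (n a (tens_o C b c))) (tens C (idm C (fo T a)) (n b c)) =
        seq C (seq C (n (tens_o C a b) c) (tens C (n a b) (idm C (fo T c)))) (assoc C (fo T a) (fo T b) (fo T c))) \<and>
    \<comment> \<open>counitality\<close>
    (\<forall>a. seq C (seq C (n (unitK C) a) (tens C nK (idm C (fo T a)))) (lunit C (fo T a)) = fm T (lunit C a)) \<and>
    (\<forall>a. seq C (seq C (n a (unitK C)) (tens C (idm C (fo T a)) nK)) (runit C (fo T a)) = fm T (runit C a)) \<and>
    \<comment> \<open>symmetry\<close>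
    (\<forall>a b. seq C (n a b) (sym C (fo T a) (fo T b)) = seq C (fm T (sym C a b)) (n b a)) \<and>
    \<comment> \<open>mu and eta are comonoidal\<close>
    (\<forall>a b. seq C (mu (tens_o C a b)) (n a b) =
        seq C (seq C (fm T (n a b)) (n (fo T a) (fo T b))) (tens C (mu a) (mu b))) \<and>
    seq C (mu (unitK C)) nK = seq C (fm T nK) nK \<and>
    (\<forall>a b. seq C (eta (tens_o C a b)) (n a b) = tens C (eta a) (eta b)) \<and>
    seq C (eta (unitK C)) nK = idm C (unitK C)"

definition is_coalgebra_modality ::
  "('o,'m) smcat \<Rightarrow> ('o,'m) endofun \<Rightarrow> ('o \<Rightarrow> 'm) \<Rightarrow> ('o \<Rightarrow> 'm) \<Rightarrow> ('o \<Rightarrow> 'm) \<Rightarrow> ('o \<Rightarrow> 'm) \<Rightarrow> bool" where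
  "is_coalgebra_modality C B delta eps Dl e \<longleftrightarrow> is_comonad C B delta eps \<and>
    \<comment> \<open>Dl and e are natural\<close>
    (\<forall>a. hom C (Dl a) (fo B a) (tens_o C (fo B a) (fo B a))) \<and>
    (\<forall>f \<in> Arr C. seq C (fm B f) (Dl (tgt C f)) = seq C (Dl (src C f)) (tens C (fm B f) (fm B f))) \<and>
    (\<forall>a. hom C (e a) (fo B a) (unitK C)) \<and>
    (\<forall>f \<in> Arr C. seq C (fm B f) (e (tgt C f)) = e (src C f)) \<and>
    \<comment> \<open>each (B a, Dl a, e a) is a cocommutative comonoid\<close>
    (\<forall>a. seq C (seq C (Dl a) (tens C (Dl a) (idm C (fo B a)))) (assoc C (fo B a) (fo B a) (fo B a)) =
         seq C (Dl a) (tens C (idm C (fo B a)) (Dl a))) \<and>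
    (\<forall>a. seq C (seq C (Dl a) (tens C (e a) (idm C (fo B a)))) (lunit C (fo B a)) = idm C (fo B a)) \<and>
    (\<forall>a. seq C (seq C (Dl a) (tens C (idm C (fo B a)) (e a))) (runit C (fo B a)) = idm C (fo B a)) \<and>
    (\<forall>a. seq C (Dl a) (sym C (fo B a) (fo B a)) = Dl a) \<and>
    \<comment> \<open>delta is a comonoid morphism\<close>
    (\<forall>a. seq C (delta a) (Dl (fo B a)) = seq C (Dl a) (tens C (delta a) (delta a))) \<and>
    (\<forall>a. seq C (delta a) (e (fo B a)) = e a)"

definition is_mixed_distributive_law ::
  "('o,'m) smcat \<Rightarrow> ('o,'m) endofun \<Rightarrow> ('o \<Rightarrow> 'm) \<Rightarrow> ('o \<Rightarrow> 'm) \<Rightarrow>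
   ('o,'m) endofun \<Rightarrow> ('o \<Rightarrow> 'm) \<Rightarrow> ('o \<Rightarrow> 'm) \<Rightarrow> ('o \<Rightarrow> 'm) \<Rightarrow> bool" where
  "is_mixed_distributive_law C T mu eta B delta eps lam \<longleftrightarrow>
    nat_trans C (fcomp B T) (fcomp T B) lam \<and>
    (\<forall>a. seq C (mu (fo B a)) (lam a) = seq C (seq C (fm T (lam a)) (lam (fo T a))) (fm B (mu a))) \<and>
    (\<forall>a. seq C (eta (fo B a)) (lam a) = fm B (eta a)) \<and>
    (\<forall>a. seq C (seq C (fm T (delta a)) (lam (fo B a))) (fm B (lam a)) = seq C (lam a) (delta (fo T a))) \<and>
    (\<forall>a. seq C (lam a) (eps (fo T a)) = fm T (eps a))"

definition is_coalgebra_mixed_distributive_law ::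
  "('o,'m) smcat \<Rightarrow> ('o,'m) endofun \<Rightarrow> ('o \<Rightarrow> 'm) \<Rightarrow> ('o \<Rightarrow> 'm) \<Rightarrow> ('o \<Rightarrow> 'o \<Rightarrow> 'm) \<Rightarrow> 'm \<Rightarrow>
   ('o,'m) endofun \<Rightarrow> ('o \<Rightarrow> 'm) \<Rightarrow> ('o \<Rightarrow> 'm) \<Rightarrow> ('o \<Rightarrow> 'm) \<Rightarrow> ('o \<Rightarrow> 'm) \<Rightarrow> ('o \<Rightarrow> 'm) \<Rightarrow> bool" where
  "is_coalgebra_mixed_distributive_law C T mu eta n nK B delta eps Dl e lam \<longleftrightarrow>
    is_mixed_distributive_law C T mu eta B delta eps lam \<and>
    (\<forall>a. seq C (seq C (fm T (Dl a)) (n (fo B a) (fo B a))) (tens C (lam a) (lam a)) =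
         seq C (lam a) (Dl (fo T a))) \<and>
    (\<forall>a. seq C (fm T (e a)) nK = seq C (lam a) (e (fo T a)))"

definition is_coalgebra ::
  "('o,'m) smcat \<Rightarrow> ('o,'m) endofun \<Rightarrow> ('o \<Rightarrow> 'm) \<Rightarrow> ('o \<Rightarrow> 'm) \<Rightarrow> 'o \<Rightarrow> 'm \<Rightarrow> bool" where
  "is_coalgebra C B delta eps A w \<longleftrightarrow> hom C w A (fo B A) \<and>
    seq C w (delta A) = seq C w (fm B w) \<and> seq C w (eps A) = idm C A"

definition coDelta ::
  "('o,'m) smcat \<Rightarrow> ('o \<Rightarrow> 'm) \<Rightarrow> ('o \<Rightarrow> 'm) \<Rightarrow> 'o \<Rightarrow> 'm \<Rightarrow> 'm" where
  "coDelta C Dl eps A w = seq C (seq C w (Dl A)) (tens C (eps A) (eps A))"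

definition coE :: "('o,'m) smcat \<Rightarrow> ('o \<Rightarrow> 'm) \<Rightarrow> 'o \<Rightarrow> 'm \<Rightarrow> 'm" where
  "coE C e A w = seq C w (e A)"

definition flat :: "('o,'m) smcat \<Rightarrow> ('o,'m) endofun \<Rightarrow> ('o \<Rightarrow> 'm) \<Rightarrow> 'o \<Rightarrow> 'm \<Rightarrow> 'm" where
  "flat C T lam A w = seq C (fm T w) (lam A)"

end

theory Submission
  imports Defs
begin

text \<open>The heart of the matter is the cofree case \<omega> = id: applying T to the comonoid
  structure \<Delta>;(\<epsilon>\<otimes>\<epsilon>), e of !a and then the comonoidal structure of T agrees
  with first distributing by \<lambda> and then using the same structure on !(T a).  For \<Delta>
  this follows from naturality of n, the counit law \<lambda>;\<epsilon> = T(\<epsilon>) and the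
  comultiplication law of \<lambda>; for e it is the counit law of \<lambda>.  Precomposing with
  T(\<omega>) gives the statement, so only the typing \<omega> : A \<rightarrow> !A of the coalgebra is used.\<close>

lemma hom_seq:
  assumes "is_category C" "hom C f a b" "hom C g b c"
  shows "hom C (seq C f g) a c"
  using assms unfolding is_category_def hom_def by metis

lemma seq_assoc:
  assumes "is_category C" "hom C f a b" "hom C g b c" "hom C h c d"
  shows "seq C (seq C f g) h = seq C f (seq C g h)"
  using assms unfolding is_category_def hom_def by metis

lemma hom_tens:
  assumes "is_symmetric_monoidal C" "hom C f a b" "hom C g c d"
  shows "hom C (tens C f g) (tens_o C a c) (tens_o C b d)"
  using assms unfolding is_symmetric_monoidal_def hom_def by metis

lemma tens_seq:
  assumes "is_symmetric_monoidal C"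
    and "hom C f a b" "hom C f' b c" "hom C g a' b'" "hom C g' b' c'"
  shows "tens C (seq C f f') (seq C g g') = seq C (tens C f g) (tens C f' g')"
  using assms unfolding is_symmetric_monoidal_def hom_def by metis

lemma hom_fm:
  assumes "is_endofunctor C F" "hom C f a b"
  shows "hom C (fm F f) (fo F a) (fo F b)"
  using assms unfolding is_endofunctor_def hom_def by metis

lemma fm_seq:
  assumes "is_endofunctor C F" "hom C f a b" "hom C g b c"
  shows "fm F (seq C f g) = seq C (fm F f) (fm F g)"
  using assms unfolding is_endofunctor_def hom_def by metis

locale coalgebra_mixed_distributive_law_setting =
  fixes C :: "('o,'m) smcat" and T B :: "('o,'m) endofun"
    and mu eta delta eps Dl e lam :: "'o \<Rightarrow> 'm"
    and n :: "'o \<Rightarrow> 'o \<Rightarrow> 'm" and nK :: 'm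
  assumes symmetric_monoidal: "is_symmetric_monoidal C"
    and comonoidal_monad: "is_sym_comonoidal_monad C T mu eta n nK"
    and coalgebra_modality: "is_coalgebra_modality C B delta eps Dl e"
    and distributive_law: "is_coalgebra_mixed_distributive_law C T mu eta n nK B delta eps Dl e lam"
begin

lemma category: "is_category C"
  using symmetric_monoidal by (simp add: is_symmetric_monoidal_def)

lemma endofunctor_T: "is_endofunctor C T"
  using comonoidal_monad by (simp add: is_sym_comonoidal_monad_def is_monad_def)

lemma hom_n: "hom C (n a b) (fo T (tens_o C a b)) (tens_o C (fo T a) (fo T b))"
  using comonoidal_monad by (simp add: is_sym_comonoidal_monad_def)

lemma n_natural:
  assumes "hom C f a b" "hom C g c d"
  shows "seq C (fm T (tens C f g)) (n b d) = seq C (n a c) (tens C (fm T f) (fm T g))"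
  using comonoidal_monad assms unfolding is_sym_comonoidal_monad_def hom_def by metis

lemma hom_nK: "hom C nK (fo T (unitK C)) (unitK C)"
  using comonoidal_monad by (simp add: is_sym_comonoidal_monad_def)

lemma hom_eps: "hom C (eps a) (fo B a) a"
  using coalgebra_modality
  by (simp add: is_coalgebra_modality_def is_comonad_def nat_trans_def Fid_def)

lemma hom_Dl: "hom C (Dl a) (fo B a) (tens_o C (fo B a) (fo B a))"
  using coalgebra_modality by (simp add: is_coalgebra_modality_def)

lemma hom_e: "hom C (e a) (fo B a) (unitK C)"
  using coalgebra_modality by (simp add: is_coalgebra_modality_def)

lemma mixed_distributive_law: "is_mixed_distributive_law C T mu eta B delta eps lam"
  using distributive_law by (simp add: is_coalgebra_mixed_distributive_law_def)

lemma hom_lam: "hom C (lam a) (fo T (fo B a)) (fo B (fo T a))"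
  using mixed_distributive_law
  by (simp add: is_mixed_distributive_law_def nat_trans_def fcomp_def)

lemma lam_eps: "seq C (lam a) (eps (fo T a)) = fm T (eps a)"
  using mixed_distributive_law by (simp add: is_mixed_distributive_law_def)

lemma lam_Dl:
  "seq C (seq C (fm T (Dl a)) (n (fo B a) (fo B a))) (tens C (lam a) (lam a)) =
   seq C (lam a) (Dl (fo T a))"
  using distributive_law by (simp add: is_coalgebra_mixed_distributive_law_def)

lemma lam_e: "seq C (fm T (e a)) nK = seq C (lam a) (e (fo T a))"
  using distributive_law by (simp add: is_coalgebra_mixed_distributive_law_def)

lemma fm_Dl_eps_n:
  "seq C (fm T (seq C (Dl a) (tens C (eps a) (eps a)))) (n a a) =
   seq C (lam a) (seq C (Dl (fo T a)) (tens C (eps (fo T a)) (eps (fo T a))))"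
proof -
  let ?Ba = "fo B a" and ?Ta = "fo T a"
  have TDl: "hom C (fm T (Dl a)) (fo T ?Ba) (fo T (tens_o C ?Ba ?Ba))"
    using hom_fm[OF endofunctor_T hom_Dl] .
  have eps2: "hom C (tens C (eps a) (eps a)) (tens_o C ?Ba ?Ba) (tens_o C a a)"
    using hom_tens[OF symmetric_monoidal hom_eps hom_eps] .
  have lam2: "hom C (tens C (lam a) (lam a))
      (tens_o C (fo T ?Ba) (fo T ?Ba)) (tens_o C (fo B ?Ta) (fo B ?Ta))"
    using hom_tens[OF symmetric_monoidal hom_lam hom_lam] .
  have epsT2: "hom C (tens C (eps ?Ta) (eps ?Ta)) (tens_o C (fo B ?Ta) (fo B ?Ta)) (tens_o C ?Ta ?Ta)"
    using hom_tens[OF symmetric_monoidal hom_eps hom_eps] .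
  have "seq C (fm T (seq C (Dl a) (tens C (eps a) (eps a)))) (n a a)
      = seq C (fm T (Dl a)) (seq C (fm T (tens C (eps a) (eps a))) (n a a))"
    using fm_seq[OF endofunctor_T hom_Dl eps2]
      seq_assoc[OF category TDl hom_fm[OF endofunctor_T eps2] hom_n] by simp
  also have "\<dots> = seq C (fm T (Dl a)) (seq C (n ?Ba ?Ba)
      (tens C (seq C (lam a) (eps ?Ta)) (seq C (lam a) (eps ?Ta))))"
    using n_natural[OF hom_eps hom_eps] lam_eps by simp
  also have "\<dots> = seq C (fm T (Dl a)) (seq C (n ?Ba ?Ba)
      (seq C (tens C (lam a) (lam a)) (tens C (eps ?Ta) (eps ?Ta))))"
    using tens_seq[OF symmetric_monoidal hom_lam hom_eps hom_lam hom_eps] by simp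
  also have "\<dots> = seq C (seq C (seq C (fm T (Dl a)) (n ?Ba ?Ba)) (tens C (lam a) (lam a)))
      (tens C (eps ?Ta) (eps ?Ta))"
    using seq_assoc[OF category TDl hom_n hom_seq[OF category lam2 epsT2]]
      seq_assoc[OF category hom_seq[OF category TDl hom_n] lam2 epsT2] by simp
  also have "\<dots> = seq C (lam a) (seq C (Dl ?Ta) (tens C (eps ?Ta) (eps ?Ta)))"
    using lam_Dl seq_assoc[OF category hom_lam hom_Dl epsT2] by simp
  finally show ?thesis .
qed

lemma fm_coDelta_n:
  assumes "hom C w A (fo B A)"
  shows "seq C (fm T (coDelta C Dl eps A w)) (n A A) = coDelta C Dl eps (fo T A) (flat C T lam A w)"
proof -
  let ?X = "seq C (Dl A) (tens C (eps A) (eps A))"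
  have X: "hom C ?X (fo B A) (tens_o C A A)"
    using hom_seq[OF category hom_Dl hom_tens[OF symmetric_monoidal hom_eps hom_eps]] .
  have Tw: "hom C (fm T w) (fo T A) (fo T (fo B A))"
    using hom_fm[OF endofunctor_T assms] .
  have "seq C (fm T (coDelta C Dl eps A w)) (n A A) = seq C (fm T (seq C w ?X)) (n A A)"
    unfolding coDelta_def
    using seq_assoc[OF category assms hom_Dl hom_tens[OF symmetric_monoidal hom_eps hom_eps]] by simp
  also have "\<dots> = seq C (fm T w) (seq C (fm T ?X) (n A A))"
    using fm_seq[OF endofunctor_T assms X]
      seq_assoc[OF category Tw hom_fm[OF endofunctor_T X] hom_n] by simp
  also have "\<dots> = coDelta C Dl eps (fo T A) (flat C T lam A w)"
    unfolding fm_Dl_eps_n coDelta_def flat_def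
    using seq_assoc[OF category Tw hom_lam hom_Dl]
      seq_assoc[OF category Tw hom_lam hom_seq[OF category hom_Dl
        hom_tens[OF symmetric_monoidal hom_eps hom_eps]]]
      seq_assoc[OF category hom_seq[OF category Tw hom_lam] hom_Dl
        hom_tens[OF symmetric_monoidal hom_eps hom_eps]]
    by simp
  finally show ?thesis .
qed

lemma fm_coE_nK:
  assumes "hom C w A (fo B A)"
  shows "seq C (fm T (coE C e A w)) nK = coE C e (fo T A) (flat C T lam A w)"
proof -
  have Tw: "hom C (fm T w) (fo T A) (fo T (fo B A))"
    using hom_fm[OF endofunctor_T assms] .
  have "seq C (fm T (coE C e A w)) nK = seq C (fm T w) (seq C (fm T (e A)) nK)"
    unfolding coE_def
    using fm_seq[OF endofunctor_T assms hom_e]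
      seq_assoc[OF category Tw hom_fm[OF endofunctor_T hom_e] hom_nK] by simp
  also have "\<dots> = coE C e (fo T A) (flat C T lam A w)"
    unfolding lam_e coE_def flat_def using seq_assoc[OF category Tw hom_lam hom_e] by simp
  finally show ?thesis .
qed

end

theorem lemma6p3:
  fixes C :: "('o,'m) smcat" and T B :: "('o,'m) endofun"
  assumes "is_symmetric_monoidal C"
    and "is_sym_comonoidal_monad C T mu eta n nK"
    and "is_coalgebra_modality C B delta eps Dl e"
    and "is_coalgebra_mixed_distributive_law C T mu eta n nK B delta eps Dl e lam"
    and "is_coalgebra C B delta eps A w"
  shows "seq C (fm T (coDelta C Dl eps A w)) (n A A) = coDelta C Dl eps (fo T A) (flat C T lam A w) \<and>
         seq C (fm T (coE C e A w)) nK = coE C e (fo T A) (flat C T lam A w)"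
proof -
  interpret coalgebra_mixed_distributive_law_setting C T B mu eta delta eps Dl e lam n nK
    using assms(1-4) by unfold_locales
  have "hom C w A (fo B A)"
    using assms(5) by (simp add: is_coalgebra_def)
  then show ?thesis
    using fm_coDelta_n fm_coE_nK by blast
qed

end
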